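(* Let $(T,\sigma,w)$ be an alternatingly weighted tree with vertices $v_1,\dots,v_g$ (in an arbitrary order). Then the matrix $\mathrm{Mat}(T)$ is effective, i.e. all nonzero terms $\mathrm{sgn}(\tau)\,m_{1\tau(1)}\cdots m_{g\tau(g)}$ ($\tau\in S_g$) in the expansion $\det(\mathrm{Mat}(T))=\sum_{\tau\in S_g}\mathrm{sgn}(\tau)m_{1\tau(1)}\cdots m_{g\tau(g)}$ have the same sign.
   Context: An alternatingly weighted tree $(T,\sigma,w)$ consists of: a finite graph $T$ that is a disjoint union of trees, with vertex set $V(T)$; a map $\sigma:V(T)\to\{\pm1\}$ such that $\sigma(v_1)=-\sigma(v_2)$ whenever $v_1,v_2$ are joined by an edge; and a map $w:V(T)\to\{0,1,\infty\}$. For each vertex $v_i$ write $w(v_i)=a(i)/b(i)$ with $(a(i),b(i))=(1,1)$ if $w(v_i)=1$, $(0,1)$ if $w(v_i)=0$, and $(1,0)$ if $w(v_i)=\infty$. The $g\times g$ matrix $\mathrm{Mat}(T)=(m_{ij})$ has diagonal entries $m_{ii}=\sigma(v_i)a(i)$; for each edge joining $v_i$ and $v_j$ with $i<j$, $m_{ij}=b(i)$ and $m_{ji}=b(j)$; all other entries are $0$. A square matrix is called effective if all nonzero terms of its determinant expansion have constant sign (all positive or all negative). *)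

theory Defs
  imports Main "HOL-Combinatorics.Permutations"
begin

datatype weight = WZero | WOne | WInf

fun wa :: "weight \<Rightarrow> int" where
  "wa WZero = 0" | "wa WOne = 1" | "wa WInf = 1"

fun wb :: "weight \<Rightarrow> int" where
  "wb WZero = 1" | "wb WOne = 1" | "wb WInf = 0"

definition has_cycle :: "(nat \<Rightarrow> nat \<Rightarrow> bool) \<Rightarrow> bool" where
  "has_cycle E \<longleftrightarrow> (\<exists>xs. length xs \<ge> 3 \<and> distinct xs \<and>
      (\<forall>k. Suc k < length xs \<longrightarrow> E (xs ! k) (xs ! Suc k)) \<and> E (last xs) (hd xs))"

definition forest :: "nat \<Rightarrow> (nat \<Rightarrow> nat \<Rightarrow> bool) \<Rightarrow> bool" where
  "forest g E \<longleftrightarrow> (\<forall>i j. E i j \<longrightarrow> i < g \<and> j < g) \<and> (\<forall>i j. E i j \<longrightarrow> E j i)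
      \<and> (\<forall>i. \<not> E i i) \<and> \<not> has_cycle E"

definition alt_weighted_tree ::
  "nat \<Rightarrow> (nat \<Rightarrow> nat \<Rightarrow> bool) \<Rightarrow> (nat \<Rightarrow> int) \<Rightarrow> (nat \<Rightarrow> weight) \<Rightarrow> bool" where
  "alt_weighted_tree g E \<sigma> w \<longleftrightarrow> forest g E \<and> (\<forall>i<g. \<sigma> i = 1 \<or> \<sigma> i = -1)
      \<and> (\<forall>i j. E i j \<longrightarrow> \<sigma> i = - \<sigma> j)"

text \<open>The matrix Mat(T), indexed by 0..g-1 (entries outside are irrelevant).\<close>
definition Mat :: "(nat \<Rightarrow> nat \<Rightarrow> bool) \<Rightarrow> (nat \<Rightarrow> int) \<Rightarrow> (nat \<Rightarrow> weight) \<Rightarrow> nat \<Rightarrow> nat \<Rightarrow> int" where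
  "Mat E \<sigma> w i j = (if i = j then \<sigma> i * wa (w i)
      else if i < j \<and> E i j then wb (w i)
      else if j < i \<and> E j i then wb (w i)
      else 0)"

definition det_term :: "nat \<Rightarrow> (nat \<Rightarrow> nat \<Rightarrow> int) \<Rightarrow> (nat \<Rightarrow> nat) \<Rightarrow> int" where
  "det_term g M \<tau> = sign \<tau> * (\<Prod>i<g. M i (\<tau> i))"

definition effective :: "nat \<Rightarrow> (nat \<Rightarrow> nat \<Rightarrow> int) \<Rightarrow> bool" where
  "effective g M \<longleftrightarrow> (\<forall>\<tau> \<tau>'. \<tau> permutes {..<g} \<longrightarrow> \<tau>' permutes {..<g} \<longrightarrow>
      det_term g M \<tau> \<noteq> 0 \<longrightarrow> det_term g M \<tau>' \<noteq> 0 \<longrightarrow>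
      sgn (det_term g M \<tau>) = sgn (det_term g M \<tau>'))"

end

theory Submission
  imports Defs "HOL-Combinatorics.Cycles"
begin

text \<open>A nonzero term of the determinant expansion of \<open>Mat(T)\<close> only uses diagonal entries and
  entries along edges, so its permutation moves every vertex to a neighbour. A cycle of length
  at least 3 of such a permutation would be a cycle of the forest, hence the permutation is an
  involution: a product of disjoint transpositions \<open>(i j)\<close> along edges. Such a transposition
  contributes \<open>-1\<close> to the sign and two off-diagonal entries \<open>1\<close>, in place of
  \<open>\<sigma>(v\<^sub>i)\<sigma>(v\<^sub>j) = -1\<close>, while a fixed vertex contributes its diagonal entry
  \<open>\<sigma>(v\<^sub>i)\<close>. Thus every nonzero term equals \<open>\<sigma>(v\<^sub>1)\<cdots>\<sigma>(v\<^sub>g)\<close>.\<close>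

lemma permutation_along_acyclic_edges_involutory:
  assumes "permutation \<tau>" and along: "\<And>x. \<tau> x = x \<or> E x (\<tau> x)" and "\<not> has_cycle E"
  shows "\<tau> (\<tau> x) = x"
proof (rule ccontr)
  assume "\<tau> (\<tau> x) \<noteq> x"
  then have "\<tau> x \<noteq> x" by auto
  define n where "n = least_power \<tau> x"
  define xs where "xs = support \<tau> x"
  have len: "length xs = n" by (simp add: xs_def n_def)
  have "n > 1" using least_power_gt_one[OF assms(1) \<open>\<tau> x \<noteq> x\<close>] by (simp add: n_def)
  moreover have "n \<noteq> 2"
    using least_power_of_permutation(1)[OF assms(1), of x] \<open>\<tau> (\<tau> x) \<noteq> x\<close>
    by (auto simp: n_def numeral_2_eq_2)
  ultimately have "n \<ge> 3" by linarith
  have "distinct xs" using cycle_of_permutation[OF assms(1)] by (simp add: xs_def)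
  have nth: "xs ! k = (\<tau> ^^ k) x" if "k < n" for k using that by (simp add: xs_def n_def)
  \<comment> \<open>Consecutive points of the orbit are distinct, so \<open>\<tau>\<close> moves each of them along an edge.\<close>
  have edge: "E y (\<tau> y)" if "\<tau> y \<noteq> y" for y using along[of y] that by blast
  have "E (xs ! k) (xs ! Suc k)" if "Suc k < length xs" for k
  proof -
    have "xs ! Suc k = \<tau> (xs ! k)" using that by (simp add: nth len)
    moreover have "xs ! Suc k \<noteq> xs ! k" using \<open>distinct xs\<close> that by (simp add: nth_eq_iff_index_eq)
    ultimately show ?thesis using edge by metis
  qed
  moreover have "E (last xs) (hd xs)"
  proof -
    have "xs \<noteq> []" using \<open>n \<ge> 3\<close> len by auto
    then have "last xs = xs ! (n - 1)" and "hd xs = xs ! 0"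
      using len by (simp_all add: last_conv_nth hd_conv_nth)
    moreover have "\<tau> (xs ! (n - 1)) = xs ! 0"
      using \<open>n \<ge> 3\<close> least_power_of_permutation(1)[OF assms(1), of x]
      by (cases n) (simp_all add: nth n_def)
    moreover have "xs ! (n - 1) \<noteq> xs ! 0"
      using \<open>distinct xs\<close> \<open>n \<ge> 3\<close> len by (simp add: nth_eq_iff_index_eq)
    ultimately show ?thesis using edge by metis
  qed
  ultimately have "has_cycle E"
    unfolding has_cycle_def using \<open>n \<ge> 3\<close> len \<open>distinct xs\<close> by blast
  with assms(3) show False ..
qed

lemma sign_mult_prod_fixed_points:
  fixes \<sigma> :: "'a \<Rightarrow> 'b::comm_ring_1"
  assumes "\<tau> permutes S" and "finite S" and "\<And>x. \<tau> (\<tau> x) = x"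
    and "\<And>x. x \<in> S \<Longrightarrow> \<tau> x \<noteq> x \<Longrightarrow> \<sigma> x * \<sigma> (\<tau> x) = -1"
  shows "of_int (sign \<tau>) * (\<Prod>x\<in>S. if \<tau> x = x then \<sigma> x else 1) = (\<Prod>x\<in>S. \<sigma> x)"
  using assms(1,3,4)
proof (induction "card {x. \<tau> x \<noteq> x}" arbitrary: \<tau> rule: less_induct)
  case less
  have moved_sub: "{x. \<tau> x \<noteq> x} \<subseteq> S" using permutes_not_in[OF less.prems(1)] by auto
  show ?case
  proof (cases "\<exists>i. \<tau> i \<noteq> i")
    case False
    then have "\<tau> = id" by auto
    then show ?thesis by simp
  next
    case True
    then obtain i where "\<tau> i \<noteq> i" by blast
    define j where "j = \<tau> i"
    have "i \<in> S" "j \<in> S" "i \<noteq> j" "\<tau> j = i"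
      using moved_sub \<open>\<tau> i \<noteq> i\<close> permutes_in_image[OF less.prems(1)] less.prems(2)
      by (auto simp: j_def)
    \<comment> \<open>Splitting off the transposition \<open>(i j)\<close> leaves an involution with two fewer moved points.\<close>
    define \<tau>' where "\<tau>' = transpose i j \<circ> \<tau>"
    have other: "\<tau> x \<noteq> i \<and> \<tau> x \<noteq> j" if "x \<noteq> i" "x \<noteq> j" for x
      using that less.prems(2)[of x] \<open>\<tau> j = i\<close> by (metis j_def)
    have \<tau>'_ij: "\<tau>' i = i" "\<tau>' j = j" using \<open>\<tau> j = i\<close> by (simp_all add: \<tau>'_def j_def)
    have \<tau>'_other: "\<tau>' x = \<tau> x" if "x \<noteq> i" "x \<noteq> j" for x
      using other[OF that] by (simp add: \<tau>'_def)
    have "\<tau>' permutes S"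
      unfolding \<tau>'_def using less.prems(1) permutes_swap_id[OF \<open>i \<in> S\<close> \<open>j \<in> S\<close>]
      by (rule permutes_compose)
    moreover have "\<tau>' (\<tau>' x) = x" for x
      using \<tau>'_ij \<tau>'_other other less.prems(2) by (cases "x = i \<or> x = j") auto
    moreover have "\<sigma> x * \<sigma> (\<tau>' x) = -1" if "x \<in> S" "\<tau>' x \<noteq> x" for x
      using that less.prems(3) \<tau>'_ij \<tau>'_other by (cases "x = i \<or> x = j") auto
    moreover have moved': "{x. \<tau>' x \<noteq> x} = {x. \<tau> x \<noteq> x} - {i, j}"
    proof -
      have "\<tau>' x \<noteq> x \<longleftrightarrow> \<tau> x \<noteq> x \<and> x \<notin> {i, j}" for x
        using \<tau>'_ij \<tau>'_other by (cases "x = i \<or> x = j") auto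
      then show ?thesis by blast
    qed
    moreover have "card {x. \<tau>' x \<noteq> x} < card {x. \<tau> x \<noteq> x}"
      unfolding moved' using moved_sub \<open>\<tau> i \<noteq> i\<close> finite_subset[OF moved_sub \<open>finite S\<close>]
      by (intro psubset_card_mono) auto
    ultimately have IH: "of_int (sign \<tau>') * (\<Prod>x\<in>S. if \<tau>' x = x then \<sigma> x else 1) = (\<Prod>x\<in>S. \<sigma> x)"
      using less.hyps by blast
    have "sign \<tau>' = - sign \<tau>"
      using sign_compose[OF permutation_swap_id permutes_imp_permutation[OF \<open>finite S\<close> less.prems(1)]]
      by (simp add: \<tau>'_def sign_swap_id \<open>i \<noteq> j\<close>)
    define R where "R = S - {i, j}"
    have S_split: "S = insert i (insert j R)" "i \<notin> insert j R" "j \<notin> R" "finite R"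
      using \<open>i \<in> S\<close> \<open>j \<in> S\<close> \<open>i \<noteq> j\<close> \<open>finite S\<close> by (auto simp: R_def)
    have "(\<Prod>x\<in>R. if \<tau>' x = x then \<sigma> x else 1) = (\<Prod>x\<in>R. if \<tau> x = x then \<sigma> x else 1)"
      by (rule prod.cong) (auto simp: R_def \<tau>'_other)
    then have "(\<Prod>x\<in>S. if \<tau>' x = x then \<sigma> x else 1)
        = \<sigma> i * \<sigma> j * (\<Prod>x\<in>S. if \<tau> x = x then \<sigma> x else 1)"
      unfolding S_split(1) using S_split(2-4) \<tau>'_ij \<open>\<tau> i \<noteq> i\<close> \<open>\<tau> j = i\<close> \<open>i \<noteq> j\<close>
      by (simp add: j_def)
    moreover have "\<sigma> i * \<sigma> j = -1"
      using less.prems(3) \<open>i \<in> S\<close> \<open>\<tau> i \<noteq> i\<close> by (simp add: j_def)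
    ultimately show ?thesis using IH \<open>sign \<tau>' = - sign \<tau>\<close> by (simp add: algebra_simps)
  qed
qed

lemma Mat_nonzero_entry:
  assumes "\<And>i j. E i j \<Longrightarrow> E j i" and "Mat E \<sigma> w k l \<noteq> 0"
  shows "l = k \<or> E k l" and "Mat E \<sigma> w k l = (if l = k then \<sigma> k else 1)"
  using assms unfolding Mat_def by (cases "w k"; auto split: if_splits)+

lemma det_term_Mat_nonzero:
  assumes tree: "alt_weighted_tree g E \<sigma> w" and perm: "\<tau> permutes {..<g}"
    and nonzero: "det_term g (Mat E \<sigma> w) \<tau> \<noteq> 0"
  shows "det_term g (Mat E \<sigma> w) \<tau> = (\<Prod>i<g. \<sigma> i)"
proof -
  have sym: "\<And>i j. E i j \<Longrightarrow> E j i" and acyclic: "\<not> has_cycle E"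
    and signs: "\<forall>i<g. \<sigma> i = 1 \<or> \<sigma> i = -1" and alternating: "\<forall>i j. E i j \<longrightarrow> \<sigma> i = - \<sigma> j"
    using tree unfolding alt_weighted_tree_def forest_def by blast+
  have entry_nonzero: "Mat E \<sigma> w k (\<tau> k) \<noteq> 0" if "k < g" for k
    using nonzero that unfolding det_term_def by (auto simp: prod_zero_iff)
  have along: "\<tau> x = x \<or> E x (\<tau> x)" for x
    using Mat_nonzero_entry(1)[OF sym entry_nonzero] permutes_not_in[OF perm] by (cases "x < g") auto
  have "permutation \<tau>" using permutes_imp_permutation[OF finite_lessThan perm] .
  have involutory: "\<tau> (\<tau> x) = x" for x
    using permutation_along_acyclic_edges_involutory[OF \<open>permutation \<tau>\<close> along acyclic] .
  have swapped_signs: "\<sigma> x * \<sigma> (\<tau> x) = -1" if "x \<in> {..<g}" "\<tau> x \<noteq> x" for x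
    using that along[of x] alternating signs by fastforce
  from sign_mult_prod_fixed_points[where \<sigma> = \<sigma>, OF perm finite_lessThan involutory swapped_signs]
  have "sign \<tau> * (\<Prod>k<g. if \<tau> k = k then \<sigma> k else 1) = (\<Prod>k<g. \<sigma> k)" by simp
  moreover have "(\<Prod>k<g. Mat E \<sigma> w k (\<tau> k)) = (\<Prod>k<g. if \<tau> k = k then \<sigma> k else 1)"
    using Mat_nonzero_entry(2)[OF sym entry_nonzero] by (intro prod.cong) auto
  ultimately show ?thesis unfolding det_term_def by simp
qed

theorem proposition5p1:
  fixes g :: nat and E :: "nat \<Rightarrow> nat \<Rightarrow> bool" and \<sigma> :: "nat \<Rightarrow> int" and w :: "nat \<Rightarrow> weight"
  assumes "alt_weighted_tree g E \<sigma> w"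
  shows "effective g (Mat E \<sigma> w)"
  using det_term_Mat_nonzero[OF assms] unfolding effective_def by metis

end
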